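(* For every alphabet $\Sigma$, every $n\ge 2$ and every $n$-gram LM $p$ over $\Sigma$, there exists a single-layer sparse attention transformer LM with $n-1$ attention heads that is weakly equivalent to $p$.
   Context: Let $\Sigma$ be a finite nonempty alphabet and let $\mathrm{EOS},\mathrm{BOS}\notin\Sigma$ be distinct symbols; put $\overline\Sigma=\Sigma\cup\{\mathrm{EOS}\}$ and $\underline\Sigma=\Sigma\cup\{\mathrm{BOS}\}$. A language model (LM) over $\Sigma$ is a probability distribution $p$ on $\Sigma^*$ given autoregressively by $p(y)=p(\mathrm{EOS}\mid y)\prod_{t=1}^{|y|}p(y_t\mid y_{<t})$, where each $p(\cdot\mid y_{<t})$ is a probability distribution on $\overline\Sigma$. Two LMs $p,q$ over $\Sigma$ are weakly equivalent if $p(y)=q(y)$ for all $y\in\Sigma^*$. For $n\ge2$, an $n$-gram LM is an LM such that, after left-padding every string with $n-1$ copies of $\mathrm{BOS}$, $p(y_t\mid y_{<t})=p(y_t\mid y_{t-n+1}\cdots y_{t-1})$ depends only on the history $y_{t-n+1}\cdots y_{t-1}\in\underline\Sigma^{\,n-1}$ (the last $n-1$ symbols of the padded prefix); the distributions on $\overline\Sigma$ assigned to the histories are arbitrary (probabilities may be $0$). Transformers. A transformer of width $D$ processes a string $w=w_1\cdots w_T$ over $\underline\Sigma$ (for an LM, the prefix $y_{<t}$ left-padded with $n-1$ copies of BOS) as follows. A static encoding gives $x^0_j=r(w_j,j)\in\mathbb R^D$ for a function $r:\underline\Sigma\times\mathbb N\to\mathbb R^D$. An attention head with query, key, value, output functions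 $Q,K,V,O:\mathbb R^D\to\mathbb R^D$, scoring function $f:\mathbb R^D\times\mathbb R^D\to\mathbb R$ and normalization function $\pi$ maps $(x_1,\dots,x_T)$ to $(z_1,\dots,z_T)$ where, for each position $s$, $q_s=Q(x_s)$, $k_j=K(x_j)$, $v_j=V(x_j)$, $\sigma=\pi(f(q_s,k_1),\dots,f(q_s,k_s))$ (a probability vector), $a_s=\sum_{j=1}^s\sigma_jv_j+x_s$, $z_s=O(a_s)+a_s$. A layer with $H$ heads applies $H$ heads to the same input and maps the concatenation of the $H$ outputs at each position back to $\mathbb R^D$ with a head-combining function $\mathcal H:\mathbb R^{HD}\to\mathbb R^D$; an $L$-layer transformer composes $L$ layers after $r$. Given a final function $F:\mathbb R^D\to\mathbb R^D$ and an output matrix $E\in(\mathbb R\cup\{-\infty\})^{|\overline\Sigma|\times D}$ (with $\exp(-\infty)=0$), the transformer LM sets $p(y_t\mid y_{<t})=\mathrm{softmax}(E\,F(x^L))_{y_t}$, where $x^L$ is the last-layer representation at the last position of the padded prefix $y_{<t}$. In this definition $r,Q,K,V,O,f,\mathcal H,F$ are arbitrary functions. Hard attention means $\pi=\mathrm{hardmax}$, where $\mathrm{hardmax}(x)_d=1/m$ if $d\in\arg\max x$ with $m=|\arg\max x|$, and $0$ otherwise. Sparse attention means $\pi=\mathrm{sparsemax}$, $\mathrm{sparsemax}(x)=\arg\min_{p\in\Delta}\|p-x\|_2^2$ over the probability simplex $\Delta$. *)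

theory Defs
  imports "HOL-Analysis.Analysis"
begin

text \<open>The alphabet Sigma is a finite (hence nonempty) type 'a. Over-Sigma = Sym ` UNIV \<union> {EOS}; under-Sigma = Sym ` UNIV \<union> {BOS}.\<close>

datatype 'a sym = Sym 'a | BOS | EOS

text \<open>A probability distribution on Sigma \<union> {EOS}, represented as a function on
 'a sym that is zero at BOS (which is outside its domain).\<close>
definition is_dist_bar :: "('a::finite sym \<Rightarrow> real) \<Rightarrow> bool" where
  "is_dist_bar d \<longleftrightarrow> (\<forall>s. d s \<ge> 0) \<and> d BOS = 0 \<and>
     d EOS + (\<Sum>a\<in>UNIV. d (Sym a)) = 1"

text \<open>An autoregressive model is given by its conditionals cond y_{<t} y_t.\<close>
definition string_prob :: "('a list \<Rightarrow> 'a sym \<Rightarrow> real) \<Rightarrow> 'a list \<Rightarrow> real" where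
  "string_prob cond y = cond y EOS * (\<Prod>t<length y. cond (take t y) (Sym (y ! t)))"

definition is_LM :: "('a::finite list \<Rightarrow> 'a sym \<Rightarrow> real) \<Rightarrow> bool" where
  "is_LM cond \<longleftrightarrow> (\<forall>h. is_dist_bar (cond h)) \<and>
     ((\<lambda>y. string_prob cond y) has_sum 1) UNIV"

definition weakly_equiv :: "('a list \<Rightarrow> 'a sym \<Rightarrow> real) \<Rightarrow> ('a list \<Rightarrow> 'a sym \<Rightarrow> real) \<Rightarrow> bool" where
  "weakly_equiv p q \<longleftrightarrow> (\<forall>y. string_prob p y = string_prob q y)"

definition pad :: "nat \<Rightarrow> 'a list \<Rightarrow> 'a sym list" where
  "pad n y = replicate (n - 1) BOS @ map Sym y"

definition last_n :: "nat \<Rightarrow> 'b list \<Rightarrow> 'b list" where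
  "last_n k w = drop (length w - k) w"

definition is_ngram_LM :: "nat \<Rightarrow> ('a::finite list \<Rightarrow> 'a sym \<Rightarrow> real) \<Rightarrow> bool" where
  "is_ngram_LM n p \<longleftrightarrow> is_LM p \<and>
     (\<exists>g. \<forall>y. p y = g (last_n (n - 1) (pad n y)))"

text \<open>Vectors of R^D are represented as nat \<Rightarrow> real vanishing at coordinates \<ge> D.\<close>
type_synonym vec = "nat \<Rightarrow> real"

definition wvec :: "nat \<Rightarrow> vec \<Rightarrow> bool" where
  "wvec D x \<longleftrightarrow> (\<forall>i\<ge>D. x i = 0)"

record head =
  hQ :: "vec \<Rightarrow> vec"
  hK :: "vec \<Rightarrow> vec"
  hV :: "vec \<Rightarrow> vec"
  hO :: "vec \<Rightarrow> vec"
  hscore :: "vec \<Rightarrow> vec \<Rightarrow> real"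

text \<open>A layer is a list of heads together with a head-combining function
 (taking the H head outputs at a position, i.e. their concatenation).\<close>
record 'a transformer =
  width :: nat
  embed :: "'a sym \<Rightarrow> nat \<Rightarrow> vec"
  layers :: "(head list \<times> (vec list \<Rightarrow> vec)) list"
  final :: "vec \<Rightarrow> vec"
  outmat :: "'a sym \<Rightarrow> nat \<Rightarrow> ereal"

definition prob_simplex :: "nat \<Rightarrow> real list set" where
  "prob_simplex m = {p. length p = m \<and> (\<forall>i<m. p ! i \<ge> 0) \<and> sum_list p = 1}"

definition sqdist_list :: "real list \<Rightarrow> real list \<Rightarrow> real" where
  "sqdist_list p x = (\<Sum>i<length x. (p ! i - x ! i)^2)"

definition sparsemax :: "real list \<Rightarrow> real list" where
  "sparsemax x = (THE p. p \<in> prob_simplex (length x) \<and>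
      (\<forall>q\<in>prob_simplex (length x). sqdist_list p x \<le> sqdist_list q x))"

text \<open>Attention head with normalization function pi (positions 0-based here).\<close>
definition head_out :: "(real list \<Rightarrow> real list) \<Rightarrow> head \<Rightarrow> vec list \<Rightarrow> vec list" where
  "head_out \<pi> h xs = map (\<lambda>s.
      let q = hQ h (xs ! s);
          \<sigma> = \<pi> (map (\<lambda>j. hscore h q (hK h (xs ! j))) [0..<Suc s]);
          a = (\<lambda>i. (\<Sum>j\<le>s. (\<sigma> ! j) * hV h (xs ! j) i) + (xs ! s) i)
      in (\<lambda>i. hO h a i + a i)) [0..<length xs]"

definition layer_out :: "(real list \<Rightarrow> real list) \<Rightarrow> head list \<times> (vec list \<Rightarrow> vec) \<Rightarrow> vec list \<Rightarrow> vec list" where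
  "layer_out \<pi> L xs = map (\<lambda>s. snd L (map (\<lambda>h. head_out \<pi> h xs ! s) (fst L))) [0..<length xs]"

text \<open>Static encoding r(w_j, j) with 1-based position j, then the layers in order.\<close>
definition tf_repr :: "(real list \<Rightarrow> real list) \<Rightarrow> 'a transformer \<Rightarrow> 'a sym list \<Rightarrow> vec list" where
  "tf_repr \<pi> T w = fold (layer_out \<pi>) (layers T) (map (\<lambda>j. embed T (w ! j) (Suc j)) [0..<length w])"

text \<open>exp extended to R \<union> {-\<infinity>} by exp(-\<infinity>) = 0 (logits are meant to lie in
 R \<union> {-\<infinity>}; a +\<infinity> logit is also assigned weight 0).\<close>
definition ext_exp :: "ereal \<Rightarrow> real" where
  "ext_exp x = (case x of ereal r \<Rightarrow> exp r | _ \<Rightarrow> 0)"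

definition logit :: "'a transformer \<Rightarrow> vec \<Rightarrow> 'a sym \<Rightarrow> ereal" where
  "logit T v s = (\<Sum>i<width T. outmat T s i * ereal (v i))"

definition tf_cond :: "(real list \<Rightarrow> real list) \<Rightarrow> nat \<Rightarrow> 'a::finite transformer \<Rightarrow> 'a list \<Rightarrow> 'a sym \<Rightarrow> real" where
  "tf_cond \<pi> n T y s =
     (let v = final T (last (tf_repr \<pi> T (pad n y)));
          Z = ext_exp (logit T v EOS) + (\<Sum>a\<in>UNIV. ext_exp (logit T v (Sym a)))
      in if s = BOS then 0 else ext_exp (logit T v s) / Z)"

text \<open>Width-D well-formedness: all maps act on R^D, E has entries in R \<union> {-\<infinity>}.\<close>
definition wf_transformer :: "'a transformer \<Rightarrow> bool" where
  "wf_transformer T \<longleftrightarrow> (let D = width T in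
     (\<forall>s j. wvec D (embed T s j)) \<and>
     (\<forall>L\<in>set (layers T).
        (\<forall>h\<in>set (fst L). \<forall>x. wvec D x \<longrightarrow>
            wvec D (hQ h x) \<and> wvec D (hK h x) \<and> wvec D (hV h x) \<and> wvec D (hO h x)) \<and>
        (\<forall>zs. length zs = length (fst L) \<and> (\<forall>z\<in>set zs. wvec D z) \<longrightarrow> wvec D (snd L zs))) \<and>
     (\<forall>x. wvec D x \<longrightarrow> wvec D (final T x)) \<and>
     (\<forall>s i. outmat T s i \<noteq> \<infinity>))"

end

theory Submission
  imports Defs
begin

text \<open>
  The static encoding records position and symbol of every token. Head \<open>i\<close> scores a key
  with 1 exactly when its position is \<open>i\<close> steps before the query's; the scores then already form
  a point of the simplex, which sparsemax leaves unchanged, so the head copies the symbol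
  \<open>i\<close> positions back. The \<open>n - 1\<close> heads thus deliver the history of the last position, and the
  head-combining function writes the n-gram distribution of that history into the residual
  stream in a form from which the output matrix and softmax recover it exactly.
\<close>

instance sym :: (finite) finite
proof
  have "(UNIV :: 'a sym set) = range Sym \<union> {BOS, EOS}"
    by (auto intro: sym.exhaust)
  moreover have "finite (range (Sym :: 'a \<Rightarrow> 'a sym) \<union> {BOS, EOS})"
    by simp
  ultimately show "finite (UNIV :: 'a sym set)"
    by simp
qed

lemma sparsemax_eq_self:
  assumes "x \<in> prob_simplex (length x)"
  shows "sparsemax x = x"
  unfolding sparsemax_def
proof (rule the_equality)
  show "x \<in> prob_simplex (length x) \<and>
      (\<forall>q\<in>prob_simplex (length x). sqdist_list x x \<le> sqdist_list q x)"
    using assms by (auto simp: sqdist_list_def intro!: sum_nonneg)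
next
  fix p
  assume p: "p \<in> prob_simplex (length x) \<and>
      (\<forall>q\<in>prob_simplex (length x). sqdist_list p x \<le> sqdist_list q x)"
  then have "(\<Sum>i<length x. (p ! i - x ! i)^2) \<le> 0"
    using assms by (fastforce simp: sqdist_list_def)
  then have "(\<Sum>i<length x. (p ! i - x ! i)^2) = 0"
    by (meson antisym sum_nonneg zero_le_power2)
  then have "\<forall>i<length x. p ! i = x ! i"
    by (simp add: sum_nonneg_eq_0_iff)
  moreover have "length p = length x"
    using p by (simp add: prob_simplex_def)
  ultimately show "p = x"
    by (simp add: nth_equalityI)
qed

lemma one_hot_in_prob_simplex:
  assumes "j < m"
  shows "map (\<lambda>k. if k = j then 1 else 0) [0..<m] \<in> prob_simplex m"
proof -
  have "sum_list (map (\<lambda>k. if k = j then 1 else 0) [0..<m]) = (\<Sum>k<m. if k = j then 1 else (0::real))"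
    by (simp add: sum_list_map_eq_sum_count2 atLeast0LessThan flip: sum_set_upt_conv_sum_list_nat)
  also have "\<dots> = 1"
    using assms by simp
  finally show ?thesis
    by (simp add: prob_simplex_def)
qed

lemma head_out_sparsemax_one_hot:
  assumes "j \<le> s" and "s < length xs"
    and score: "\<And>k. k \<le> s \<Longrightarrow> hscore h (hQ h (xs ! s)) (hK h (xs ! k)) = (if k = j then 1 else 0)"
  shows "head_out sparsemax h xs ! s =
    (let a = (\<lambda>c. hV h (xs ! j) c + (xs ! s) c) in (\<lambda>c. hO h a c + a c))"
proof -
  define \<sigma> :: "real list" where "\<sigma> = map (\<lambda>k. if k = j then 1 else 0) [0..<Suc s]"
  have scores: "map (\<lambda>k. hscore h (hQ h (xs ! s)) (hK h (xs ! k))) [0..<Suc s] = \<sigma>"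
    unfolding \<sigma>_def using score by (simp del: upt_Suc)
  have "sparsemax \<sigma> = \<sigma>"
    using one_hot_in_prob_simplex[of j "Suc s"] assms(1)
    by (intro sparsemax_eq_self) (simp add: \<sigma>_def del: upt_Suc)
  moreover have "(\<Sum>k\<le>s. \<sigma> ! k * hV h (xs ! k) c) = hV h (xs ! j) c" for c
  proof -
    have "(\<Sum>k\<le>s. \<sigma> ! k * hV h (xs ! k) c) = (\<Sum>k\<le>s. if k = j then hV h (xs ! k) c else 0)"
      by (rule sum.cong) (auto simp: \<sigma>_def nth_append less_Suc_eq_le simp del: upt_Suc)
    then show ?thesis
      using assms(1) by simp
  qed
  ultimately show ?thesis
    using assms(2) unfolding head_out_def by (simp add: scores Let_def del: upt_Suc)
qed

definition pos_sym_embed :: "('a sym \<Rightarrow> nat) \<Rightarrow> 'a sym \<Rightarrow> nat \<Rightarrow> vec" where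
  "pos_sym_embed code s j = (\<lambda>c. if c = 0 then real j else if c = 1 then real (code s) else 0)"

text \<open>Assuming coordinate 0 holds the position and coordinate 1 the symbol code, head
  \<open>lookback_head i\<close> writes the code of the symbol \<open>i\<close> positions back into coordinate 2.\<close>

definition lookback_head :: "nat \<Rightarrow> head" where
  "lookback_head i = \<lparr>hQ = id, hK = id, hV = (\<lambda>x c. if c = 2 then x 1 else 0), hO = (\<lambda>_ _. 0),
     hscore = (\<lambda>q k. if k 0 = q 0 - real i then 1 else 0)\<rparr>"

lemma head_out_lookback_head:
  assumes pos: "\<And>j. j < length xs \<Longrightarrow> (xs ! j) 0 = real (Suc j)"
    and "i \<le> s" and "s < length xs"
  shows "head_out sparsemax (lookback_head i) xs ! s =
    (\<lambda>c. (if c = 2 then (xs ! (s - i)) 1 else 0) + (xs ! s) c)"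
proof -
  have "hscore (lookback_head i) (hQ (lookback_head i) (xs ! s)) (hK (lookback_head i) (xs ! k)) =
      (if k = s - i then 1 else 0)" if "k \<le> s" for k
    using that assms by (auto simp: lookback_head_def pos)
  with assms have "head_out sparsemax (lookback_head i) xs ! s =
      (let a = (\<lambda>c. hV (lookback_head i) (xs ! (s - i)) c + (xs ! s) c)
       in (\<lambda>c. hO (lookback_head i) a c + a c))"
    by (intro head_out_sparsemax_one_hot) auto
  then show ?thesis
    by (simp add: lookback_head_def Let_def)
qed

lemma last_tf_repr_single_layer:
  assumes "layers T = [L]" and "w \<noteq> []"
  shows "last (tf_repr \<pi> T w) =
    snd L (map (\<lambda>h. head_out \<pi> h (map (\<lambda>j. embed T (w ! j) (Suc j)) [0..<length w]) ! (length w - 1))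
      (fst L))"
  using assms by (simp add: tf_repr_def layer_out_def last_map del: upt_Suc)

lemma last_n_conv_map_rev_upt:
  assumes "k \<le> length w"
  shows "last_n k w = map (\<lambda>i. w ! (length w - Suc i)) (rev [0..<k])"
proof (rule nth_equalityI)
  fix m
  assume "m < length (last_n k w)"
  with assms show "last_n k w ! m = map (\<lambda>i. w ! (length w - Suc i)) (rev [0..<k]) ! m"
    by (simp add: last_n_def rev_nth Suc_diff_Suc)
qed (use assms in \<open>simp add: last_n_def\<close>)

text \<open>Coordinates \<open>2 * code s\<close> and \<open>2 * code s + 1\<close> carry \<open>ln (d s)\<close> and the flag \<open>d s = 0\<close>.
  The output matrix weighs the flag with \<open>-\<infinity>\<close>; as \<open>-\<infinity> * 0 = 0\<close> in \<open>ereal\<close>, the logit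
  is \<open>ln (d s)\<close> if \<open>d s > 0\<close> and \<open>-\<infinity>\<close> otherwise.\<close>

definition dist_vec :: "nat \<Rightarrow> ('a sym \<Rightarrow> nat) \<Rightarrow> ('a sym \<Rightarrow> real) \<Rightarrow> vec" where
  "dist_vec N code d = (\<lambda>c. if c < 2 * N then
      (let s = inv code (c div 2) in if even c then ln (d s) else if d s = 0 then 1 else 0)
    else 0)"

definition dist_outmat :: "('a sym \<Rightarrow> nat) \<Rightarrow> 'a sym \<Rightarrow> nat \<Rightarrow> ereal" where
  "dist_outmat code s c = (if c = 2 * code s then 1 else if c = 2 * code s + 1 then -\<infinity> else 0)"

lemma ext_exp_dist_logit:
  assumes "inj code" and "code s < N" and "2 * N \<le> D" and "d s \<ge> 0"
  shows "ext_exp (\<Sum>c<D. dist_outmat code s c * ereal (dist_vec N code d c)) = d s"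
proof -
  let ?k = "code s"
  have "(\<Sum>c<D. dist_outmat code s c * ereal (dist_vec N code d c)) =
      (\<Sum>c\<in>{2 * ?k, 2 * ?k + 1}. dist_outmat code s c * ereal (dist_vec N code d c))"
    using assms(2,3) by (intro sum.mono_neutral_right) (auto simp: dist_outmat_def)
  also have "\<dots> = ereal (dist_vec N code d (2 * ?k)) + -\<infinity> * ereal (dist_vec N code d (2 * ?k + 1))"
    by (simp add: dist_outmat_def)
  also have "\<dots> = (if d s > 0 then ereal (ln (d s)) else -\<infinity>)"
    using assms by (simp add: dist_vec_def inv_f_f)
  finally show ?thesis
    using assms(4) by (auto simp: ext_exp_def)
qed

lemma tf_cond_eq_dist:
  assumes "is_dist_bar d"
    and "\<And>s. ext_exp (logit T (final T (last (tf_repr \<pi> T (pad n y)))) s) = d s"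
  shows "tf_cond \<pi> n T y = d"
proof
  fix s
  show "tf_cond \<pi> n T y s = d s"
    using assms by (simp add: tf_cond_def is_dist_bar_def Let_def)
qed

definition ngram_transformer ::
    "nat \<Rightarrow> ('a sym \<Rightarrow> nat) \<Rightarrow> nat \<Rightarrow> ('a sym list \<Rightarrow> 'a sym \<Rightarrow> real) \<Rightarrow> 'a transformer" where
  "ngram_transformer k code N g =
    \<lparr>width = 2 * N + 3, embed = pos_sym_embed code,
     layers = [(map lookback_head [0..<k],
                \<lambda>zs. dist_vec N code (g (map (\<lambda>z. inv code (nat \<lfloor>z 2\<rfloor>)) (rev zs))))],
     final = id, outmat = dist_outmat code\<rparr>"

lemma wf_ngram_transformer: "wf_transformer (ngram_transformer k code N g)"
  by (auto simp: wf_transformer_def ngram_transformer_def Let_def wvec_def pos_sym_embed_def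
      lookback_head_def dist_vec_def dist_outmat_def)

lemma last_tf_repr_ngram_transformer:
  assumes "inj code" and "k \<le> length w" and "w \<noteq> []"
  shows "last (tf_repr sparsemax (ngram_transformer k code N g) w) = dist_vec N code (g (last_n k w))"
proof -
  define xs where "xs = map (\<lambda>j. pos_sym_embed code (w ! j) (Suc j)) [0..<length w]"
  define s where "s = length w - 1"
  have xs_nth: "xs ! j = pos_sym_embed code (w ! j) (Suc j)" if "j < length w" for j
    using that by (simp add: xs_def)
  have head_code: "(head_out sparsemax (lookback_head i) xs ! s) 2 = real (code (w ! (s - i)))"
    if "i < k" for i
  proof -
    have "i \<le> s" "s < length xs"
      using that assms(2,3) by (auto simp: s_def xs_def)
    then show ?thesis
      by (subst head_out_lookback_head) (auto simp: xs_def xs_nth pos_sym_embed_def)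
  qed
  have "map (\<lambda>z. inv code (nat \<lfloor>z 2\<rfloor>))
      (rev (map (\<lambda>h. head_out sparsemax h xs ! s) (map lookback_head [0..<k]))) =
      map (\<lambda>i. w ! (s - i)) (rev [0..<k])"
    by (simp add: rev_map head_code assms(1) del: upt_Suc)
  also have "\<dots> = last_n k w"
    using assms(2,3) by (simp add: last_n_conv_map_rev_upt s_def)
  finally show ?thesis
    using assms(3)
    by (simp add: last_tf_repr_single_layer ngram_transformer_def xs_def s_def del: upt_Suc)
qed

lemma tf_cond_ngram_transformer:
  assumes "n \<ge> 2" and "is_LM p" and history: "\<And>y. p y = g (last_n (n - 1) (pad n y))"
    and "inj code" and "\<And>s. code s < N"
  shows "tf_cond sparsemax n (ngram_transformer (n - 1) code N g) = p"
proof
  fix y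
  let ?T = "ngram_transformer (n - 1) code N g"
  have dist: "is_dist_bar (p y)"
    using assms(2) by (simp add: is_LM_def)
  have "last (tf_repr sparsemax ?T (pad n y)) = dist_vec N code (p y)"
    using assms(1,4) by (simp add: last_tf_repr_ngram_transformer pad_def history)
  then have "ext_exp (logit ?T (final ?T (last (tf_repr sparsemax ?T (pad n y)))) s) = p y s" for s
    using dist assms(4,5) unfolding logit_def is_dist_bar_def
    by (simp add: ngram_transformer_def ext_exp_dist_logit)
  with dist show "tf_cond sparsemax n ?T y = p y"
    by (rule tf_cond_eq_dist)
qed

theorem theorem4p1:
  fixes p :: "'a::finite list \<Rightarrow> 'a sym \<Rightarrow> real" and n :: nat
  assumes "n \<ge> 2" and "is_ngram_LM n p"
  shows "\<exists>T :: 'a transformer. wf_transformer T \<and> length (layers T) = 1 \<and>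
           (\<forall>L\<in>set (layers T). length (fst L) = n - 1) \<and>
           is_LM (tf_cond sparsemax n T) \<and> weakly_equiv p (tf_cond sparsemax n T)"
proof -
  obtain g where lm: "is_LM p" and history: "\<And>y. p y = g (last_n (n - 1) (pad n y))"
    using assms(2) unfolding is_ngram_LM_def by blast
  obtain code :: "'a sym \<Rightarrow> nat" and N where "code ` UNIV = {i. i < N}" and code: "inj code"
    using finite_imp_inj_to_nat_seg[OF finite_class.finite_UNIV] by blast
  then have "code s < N" for s
    by auto
  then have "tf_cond sparsemax n (ngram_transformer (n - 1) code N g) = p"
    using tf_cond_ngram_transformer[OF assms(1) lm history code] by blast
  then show ?thesis
    using lm wf_ngram_transformer
    by (intro exI[of _ "ngram_transformer (n - 1) code N g"])
      (simp add: weakly_equiv_def ngram_transformer_def)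
qed

end
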